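(* Let $\mathcal C_1,\dots,\mathcal C_m\subset\mathbb{R}^P$ be compact convex sets each containing the origin as an interior point, and $G_i=\gamma_{\mathcal C_i}$ their gauges. For each $i$ let $L_{2,i}>0$ be a constant such that $\|\mathrm{Prox}_{tG_i}(y)-\mathrm{Prox}_{t'G_i}(y)\|\le L_{2,i}|t-t'|$ for all $t,t'>0$ and all $y\in\mathbb{R}^P$. Then for any $\theta,\theta'\in\,]0,+\infty[^m$ and any $y\in\mathbb{R}^P$, $$\big\|\mathrm{Prox}_{\theta_1G_1}\circ\cdots\circ\mathrm{Prox}_{\theta_mG_m}(y)-\mathrm{Prox}_{\theta'_1G_1}\circ\cdots\circ\mathrm{Prox}_{\theta'_mG_m}(y)\big\|\le\sqrt m\,\max_iL_{2,i}\,\|\theta-\theta'\|.$$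
   Context: The gauge of a non-empty closed convex set $\mathcal C$ containing the origin is $\gamma_{\mathcal C}(y)=\inf\{\omega>0: y\in\omega\mathcal C\}$. $\mathrm{Prox}_{G}(y)=\operatorname{argmin}_z\frac12\|z-y\|^2+G(z)$. Such constants $L_{2,i}$ exist for gauges of compact convex sets with the origin in their interior. *)

theory Defs
  imports "HOL-Analysis.Analysis"
begin

definition gauge_fn :: "'a::real_vector set \<Rightarrow> 'a \<Rightarrow> real" where
  "gauge_fn C y = Inf {\<omega>. \<omega> > 0 \<and> y \<in> (\<lambda>x. \<omega> *\<^sub>R x) ` C}"

text \<open>Proximal operator: the minimizer of 1/2 norm(z - y)^2 + G z
  (unique for proper lsc convex G; chosen by Hilbert choice).\<close>
definition prox :: "('a::real_normed_vector \<Rightarrow> real) \<Rightarrow> 'a \<Rightarrow> 'a" where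
  "prox G y = (SOME z. \<forall>w. (1/2) * (norm (z - y))\<^sup>2 + G z \<le> (1/2) * (norm (w - y))\<^sup>2 + G w)"

text \<open>Prox_{theta_0 G_0} o ... o Prox_{theta_{m-1} G_{m-1}} (y) (indices shifted to 0..m-1).\<close>
definition prox_comp :: "nat \<Rightarrow> (nat \<Rightarrow> real) \<Rightarrow> (nat \<Rightarrow> 'a::real_normed_vector \<Rightarrow> real) \<Rightarrow> 'a \<Rightarrow> 'a" where
  "prox_comp m \<theta> G y = foldr (\<lambda>i z. prox (\<lambda>x. \<theta> i * G i x) z) [0..<m] y"

end

theory Submission
  imports Defs
begin

text \<open>Each proximal map of a convex, continuous, nonnegative function is nonexpansive, by the
  variational inequality characterising the minimiser; the gauge of a convex set having the origin
  in its interior is such a function. Hence, in the composition, the error made at stage \<open>i\<close> by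
  replacing \<open>\<theta>\<^sub>i\<close> with \<open>\<theta>'\<^sub>i\<close> is at most \<open>L\<^sub>i \<bar>\<theta>\<^sub>i - \<theta>'\<^sub>i\<bar>\<close> and is not amplified by the outer stages.
  Summing these errors and applying Cauchy--Schwarz gives the bound.\<close>

definition gauge_dilations :: "'a::real_vector set \<Rightarrow> 'a \<Rightarrow> real set" where
  "gauge_dilations C y = {\<omega>. \<omega> > 0 \<and> y /\<^sub>R \<omega> \<in> C}"

lemma gauge_fn_eq_Inf_dilations: "gauge_fn C y = Inf (gauge_dilations C y)"
proof -
  have "y \<in> (\<lambda>x. \<omega> *\<^sub>R x) ` C \<longleftrightarrow> y /\<^sub>R \<omega> \<in> C" if "\<omega> > 0" for \<omega>
    using that by (auto intro: image_eqI[where x = "y /\<^sub>R \<omega>"])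
  then show ?thesis
    unfolding gauge_fn_def gauge_dilations_def by (metis (lifting))
qed

lemma gauge_dilations_nonempty:
  fixes C :: "'a::real_normed_vector set"
  assumes "0 \<in> interior C"
  shows "gauge_dilations C y \<noteq> {}"
proof -
  obtain r where r: "r > 0" "ball 0 r \<subseteq> C"
    using assms mem_interior by blast
  define \<omega> where "\<omega> = 2 * norm y / r + 1"
  have \<omega>: "\<omega> > 0"
    unfolding \<omega>_def using r by (intro add_nonneg_pos) auto
  have "norm y < r * \<omega>"
    using r by (simp add: \<omega>_def algebra_simps add_pos_nonneg)
  then have "norm (y /\<^sub>R \<omega>) < r"
    using \<omega> by (simp add: field_simps)
  then have "y /\<^sub>R \<omega> \<in> C"
    using r by auto
  then show ?thesis
    using \<omega> by (auto simp: gauge_dilations_def)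
qed

lemma gauge_dilations_upward_closed:
  assumes "convex C" "0 \<in> C" "\<omega> \<in> gauge_dilations C y" "\<omega> \<le> \<omega>'"
  shows "\<omega>' \<in> gauge_dilations C y"
proof -
  have \<omega>: "\<omega> > 0" "y /\<^sub>R \<omega> \<in> C"
    using assms(3) by (auto simp: gauge_dilations_def)
  have "y /\<^sub>R \<omega>' = (\<omega> / \<omega>') *\<^sub>R (y /\<^sub>R \<omega>) + (1 - \<omega> / \<omega>') *\<^sub>R 0"
    using \<omega> assms(4) by (simp add: inverse_eq_divide)
  also have "\<dots> \<in> C"
    using \<omega> assms by (intro convexD) auto
  finally show ?thesis
    using \<omega> assms(4) by (simp add: gauge_dilations_def)
qed

lemma gauge_fn_le:
  assumes "\<omega> \<in> gauge_dilations C y"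
  shows "gauge_fn C y \<le> \<omega>"
  unfolding gauge_fn_eq_Inf_dilations
  by (rule cInf_lower[OF assms]) (auto simp: bdd_below_def gauge_dilations_def intro!: exI[of _ 0])

lemma gauge_fn_nonneg:
  fixes C :: "'a::real_normed_vector set"
  assumes "0 \<in> interior C"
  shows "gauge_fn C y \<ge> 0"
  unfolding gauge_fn_eq_Inf_dilations
  by (rule cInf_greatest[OF gauge_dilations_nonempty[OF assms]]) (auto simp: gauge_dilations_def)

lemma gauge_fn_add_pos_mem_dilations:
  fixes C :: "'a::real_normed_vector set" and e :: real
  assumes "convex C" "0 \<in> interior C" "e > 0"
  shows "gauge_fn C y + e \<in> gauge_dilations C y"
proof -
  obtain \<omega> where "\<omega> \<in> gauge_dilations C y" "\<omega> < gauge_fn C y + e"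
    using cInf_lessD[OF gauge_dilations_nonempty[OF assms(2)], of y, where z = "gauge_fn C y + e"]
      assms(3)
    unfolding gauge_fn_eq_Inf_dilations by auto
  then show ?thesis
    using assms(1,2) interior_subset[of C]
    by (blast intro: gauge_dilations_upward_closed less_imp_le)
qed

lemma convex_on_gauge_fn:
  fixes C :: "'a::real_normed_vector set"
  assumes "convex C" "0 \<in> interior C"
  shows "convex_on UNIV (gauge_fn C)"
proof (rule convex_onI)
  fix t :: real and a b :: 'a
  assume t: "0 < t" "t < 1"
  show "gauge_fn C ((1 - t) *\<^sub>R a + t *\<^sub>R b) \<le> (1 - t) * gauge_fn C a + t * gauge_fn C b"
  proof (rule field_le_epsilon)
    fix e :: real
    assume "e > 0"
    define \<alpha> where "\<alpha> = gauge_fn C a + e"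
    define \<beta> where "\<beta> = gauge_fn C b + e"
    have \<alpha>: "\<alpha> > 0" "a /\<^sub>R \<alpha> \<in> C" and \<beta>: "\<beta> > 0" "b /\<^sub>R \<beta> \<in> C"
      using gauge_fn_add_pos_mem_dilations[OF assms \<open>e > 0\<close>]
      by (auto simp: \<alpha>_def \<beta>_def gauge_dilations_def)
    define s where "s = (1 - t) * \<alpha> + t * \<beta>"
    have s: "s > 0"
      using \<alpha> \<beta> t by (simp add: s_def add_pos_pos)
    have "((1 - t) *\<^sub>R a + t *\<^sub>R b) /\<^sub>R s
        = ((1 - t) * \<alpha> / s) *\<^sub>R (a /\<^sub>R \<alpha>) + (t * \<beta> / s) *\<^sub>R (b /\<^sub>R \<beta>)"
      using \<alpha> \<beta> s by (simp add: scaleR_add_right divide_simps)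
    also have "\<dots> \<in> C"
      using \<alpha> \<beta> s t by (intro convexD[OF assms(1)]) (auto simp: s_def add_divide_distrib[symmetric])
    finally have "gauge_fn C ((1 - t) *\<^sub>R a + t *\<^sub>R b) \<le> s"
      using s by (intro gauge_fn_le) (simp add: gauge_dilations_def)
    also have "s = (1 - t) * gauge_fn C a + t * gauge_fn C b + e"
      by (simp add: s_def \<alpha>_def \<beta>_def algebra_simps)
    finally show "gauge_fn C ((1 - t) *\<^sub>R a + t *\<^sub>R b) \<le> (1 - t) * gauge_fn C a + t * gauge_fn C b + e" .
  qed
qed simp

lemma continuous_on_gauge_fn:
  fixes C :: "'a::euclidean_space set"
  assumes "convex C" "0 \<in> interior C"
  shows "continuous_on UNIV (gauge_fn C)"
  using convex_on_continuous[OF open_UNIV convex_on_gauge_fn[OF assms]] .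

definition is_prox_point :: "('a::real_normed_vector \<Rightarrow> real) \<Rightarrow> 'a \<Rightarrow> 'a \<Rightarrow> bool" where
  "is_prox_point f y z \<longleftrightarrow> (\<forall>w. (1/2) * (norm (z - y))\<^sup>2 + f z \<le> (1/2) * (norm (w - y))\<^sup>2 + f w)"

lemma prox_point_exists:
  fixes f :: "'a::euclidean_space \<Rightarrow> real"
  assumes "continuous_on UNIV f" "\<And>x. f x \<ge> 0"
  shows "\<exists>z. is_prox_point f y z"
proof -
  define h where "h w = (1/2) * (norm (w - y))\<^sup>2 + f w" for w
  \<comment> \<open>outside this ball the quadratic term alone exceeds \<open>h y = f y\<close>\<close>
  define R where "R = sqrt (2 * f y)"
  have R: "R \<ge> 0" "R\<^sup>2 = 2 * f y"
    using assms(2)[of y] by (auto simp: R_def)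
  have "continuous_on (cball y R) h"
    unfolding h_def by (intro continuous_intros continuous_on_subset[OF assms(1)]) auto
  then obtain z where z: "z \<in> cball y R" "\<And>w. w \<in> cball y R \<Longrightarrow> h z \<le> h w"
    using continuous_attains_inf[OF compact_cball] R(1) by (metis cball_eq_empty not_less)
  have "h z \<le> h w" for w
  proof (cases "w \<in> cball y R")
    case False
    then have "R\<^sup>2 < (norm (w - y))\<^sup>2"
      using R(1) by (simp add: dist_norm norm_minus_commute power_strict_mono)
    then have "h y < h w"
      using R(2) assms(2)[of w] by (simp add: h_def)
    moreover have "h z \<le> h y"
      using z R(1) by simp
    ultimately show ?thesis
      by simp
  qed (use z in blast)
  then show ?thesis
    unfolding is_prox_point_def h_def by blast
qed

lemma is_prox_point_prox:
  fixes f :: "'a::euclidean_space \<Rightarrow> real"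
  assumes "continuous_on UNIV f" "\<And>x. f x \<ge> 0"
  shows "is_prox_point f y (prox f y)"
  using someI_ex[OF prox_point_exists[OF assms]] unfolding prox_def is_prox_point_def .

lemma prox_point_variational_inequality:
  fixes f :: "'a::real_inner \<Rightarrow> real"
  assumes "convex_on UNIV f" "is_prox_point f a p"
  shows "inner (a - p) (w - p) \<le> f w - f p"
proof -
  define N where "N = (norm (w - p))\<^sup>2"
  \<comment> \<open>compare \<open>p\<close> with the points \<open>p + s(w - p)\<close> of the segment towards \<open>w\<close>, then let \<open>s \<rightarrow> 0\<close>\<close>
  have segment: "inner (a - p) (w - p) - (f w - f p) \<le> s / 2 * N" if s: "0 < s" "s \<le> 1" for s
  proof -
    define ws where "ws = (1 - s) *\<^sub>R p + s *\<^sub>R w"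
    have "(1/2) * (norm (p - a))\<^sup>2 + f p \<le> (1/2) * (norm (ws - a))\<^sup>2 + f ws"
      using assms(2) unfolding is_prox_point_def by blast
    moreover have "f ws \<le> (1 - s) * f p + s * f w"
      unfolding ws_def using convex_onD[OF assms(1), of s p w] s by simp
    moreover have "(norm (ws - a))\<^sup>2 = (norm (p - a))\<^sup>2 + 2 * s * inner (p - a) (w - p) + s\<^sup>2 * N"
    proof -
      have shift: "ws - a = (p - a) + s *\<^sub>R (w - p)"
        by (simp add: ws_def algebra_simps)
      have square: "(norm (x + y))\<^sup>2 = (norm x)\<^sup>2 + 2 * inner x y + (norm y)\<^sup>2" for x y :: 'a
        by (simp add: power2_norm_eq_inner inner_add_left inner_add_right inner_commute)
      show ?thesis
        unfolding shift square N_def by (simp add: power_mult_distrib)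
    qed
    ultimately have "0 \<le> s * (inner (p - a) (w - p) + s / 2 * N + (f w - f p))"
      by (simp add: algebra_simps power2_eq_square)
    then have "0 \<le> inner (p - a) (w - p) + s / 2 * N + (f w - f p)"
      using s by (simp add: zero_le_mult_iff)
    then show ?thesis
      by (simp add: inner_diff_left inner_commute)
  qed
  have "inner (a - p) (w - p) - (f w - f p) \<le> 0"
  proof (rule field_le_epsilon)
    fix e :: real
    assume "e > 0"
    define s where "s = min 1 (e / (N + 1))"
    have N: "N \<ge> 0"
      by (simp add: N_def)
    have s: "0 < s" "s \<le> 1"
      using \<open>e > 0\<close> N by (auto simp: s_def)
    have "s / 2 * N \<le> e / (N + 1) * N"
      using s N \<open>e > 0\<close> by (intro mult_right_mono) (auto simp: s_def min_def divide_right_mono)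
    also have "\<dots> \<le> e"
      using \<open>e > 0\<close> N by (simp add: field_simps)
    finally show "inner (a - p) (w - p) - (f w - f p) \<le> 0 + e"
      using segment[OF s] by simp
  qed
  then show ?thesis
    by simp
qed

lemma prox_point_nonexpansive:
  fixes f :: "'a::real_inner \<Rightarrow> real"
  assumes "convex_on UNIV f" "is_prox_point f a p" "is_prox_point f b q"
  shows "norm (p - q) \<le> norm (a - b)"
proof -
  have "inner (a - p) (q - p) + inner (b - q) (p - q) \<le> 0"
    using prox_point_variational_inequality[OF assms(1,2), of q]
      prox_point_variational_inequality[OF assms(1,3), of p] by simp
  then have "(norm (p - q))\<^sup>2 \<le> inner (a - b) (p - q)"
    by (simp add: power2_norm_eq_inner inner_diff_left inner_diff_right inner_commute algebra_simps)
  also have "\<dots> \<le> norm (a - b) * norm (p - q)"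
    by (rule norm_cauchy_schwarz)
  finally show ?thesis
    by (cases "p = q") (auto simp: power2_eq_square mult_le_cancel_right)
qed

lemma prox_nonexpansive:
  fixes f :: "'a::euclidean_space \<Rightarrow> real"
  assumes "convex_on UNIV f" "continuous_on UNIV f" "\<And>x. f x \<ge> 0"
  shows "norm (prox f a - prox f b) \<le> norm (a - b)"
  using assms(1) is_prox_point_prox[OF assms(2,3)] is_prox_point_prox[OF assms(2,3)]
  by (rule prox_point_nonexpansive)

lemma prox_scaled_gauge_nonexpansive:
  fixes C :: "'a::euclidean_space set"
  assumes "convex C" "0 \<in> interior C" "t \<ge> 0"
  shows "norm (prox (\<lambda>x. t * gauge_fn C x) a - prox (\<lambda>x. t * gauge_fn C x) b) \<le> norm (a - b)"
  using assms convex_on_gauge_fn continuous_on_gauge_fn gauge_fn_nonneg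
  by (intro prox_nonexpansive convex_on_cmul continuous_intros mult_nonneg_nonneg) auto

lemma dist_foldr_le_sum_list:
  fixes T T' :: "'i \<Rightarrow> 'a::metric_space \<Rightarrow> 'a"
  assumes "\<And>i a b. i \<in> set xs \<Longrightarrow> dist (T i a) (T i b) \<le> dist a b"
    and "\<And>i y. i \<in> set xs \<Longrightarrow> dist (T i y) (T' i y) \<le> e i"
  shows "dist (foldr T xs y) (foldr T' xs y) \<le> sum_list (map e xs)"
  using assms
proof (induction xs)
  case (Cons i xs)
  let ?z = "foldr T xs y" and ?z' = "foldr T' xs y"
  have "dist (T i ?z) (T' i ?z') \<le> dist (T i ?z) (T i ?z') + dist (T i ?z') (T' i ?z')"
    by (rule dist_triangle)
  also have "\<dots> \<le> dist ?z ?z' + e i"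
    using Cons.prems by (intro add_mono) auto
  also have "\<dots> \<le> sum_list (map e xs) + e i"
    using Cons by simp
  finally show ?case
    by simp
qed simp

lemma sum_abs_le_sqrt_card_mult_L2_set:
  fixes x :: "'i \<Rightarrow> real"
  shows "(\<Sum>i\<in>A. \<bar>x i\<bar>) \<le> sqrt (real (card A)) * L2_set x A"
  using L2_set_mult_ineq[of x "\<lambda>_. 1" A] L2_set_constant[of 1 A] by (simp add: mult.commute)

lemma norm_prox_comp_gauge_diff_le_sum:
  fixes C :: "nat \<Rightarrow> 'a::euclidean_space set"
  assumes "\<And>i. i < m \<Longrightarrow> convex (C i) \<and> 0 \<in> interior (C i)"
    and "\<And>i t t' y. i < m \<Longrightarrow> t > 0 \<Longrightarrow> t' > 0 \<Longrightarrow>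
           norm (prox (\<lambda>x. t * gauge_fn (C i) x) y - prox (\<lambda>x. t' * gauge_fn (C i) x) y)
             \<le> L i * \<bar>t - t'\<bar>"
    and "\<And>i. i < m \<Longrightarrow> \<theta> i > 0" "\<And>i. i < m \<Longrightarrow> \<theta>' i > 0"
  shows "norm (prox_comp m \<theta> (\<lambda>i. gauge_fn (C i)) y - prox_comp m \<theta>' (\<lambda>i. gauge_fn (C i)) y)
           \<le> (\<Sum>i<m. L i * \<bar>\<theta> i - \<theta>' i\<bar>)"
proof -
  have "dist (prox_comp m \<theta> (\<lambda>i. gauge_fn (C i)) y) (prox_comp m \<theta>' (\<lambda>i. gauge_fn (C i)) y)
      \<le> sum_list (map (\<lambda>i. L i * \<bar>\<theta> i - \<theta>' i\<bar>) [0..<m])"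
    unfolding prox_comp_def
  proof (rule dist_foldr_le_sum_list)
    fix i a b
    assume "i \<in> set [0..<m]"
    then have "convex (C i)" "0 \<in> interior (C i)" "\<theta> i \<ge> 0"
      using assms(1,3) by (auto simp: less_imp_le)
    then show "dist (prox (\<lambda>x. \<theta> i * gauge_fn (C i) x) a) (prox (\<lambda>x. \<theta> i * gauge_fn (C i) x) b)
        \<le> dist a b"
      unfolding dist_norm by (rule prox_scaled_gauge_nonexpansive)
  next
    fix i z
    assume "i \<in> set [0..<m]"
    then show "dist (prox (\<lambda>x. \<theta> i * gauge_fn (C i) x) z) (prox (\<lambda>x. \<theta>' i * gauge_fn (C i) x) z)
        \<le> L i * \<bar>\<theta> i - \<theta>' i\<bar>"
      using assms(2-4) by (simp add: dist_norm)
  qed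
  then show ?thesis
    by (simp add: dist_norm atLeast0LessThan flip: sum_set_upt_conv_sum_list_nat)
qed

theorem corollary5:
  fixes C :: "nat \<Rightarrow> 'a::euclidean_space set"
    and L :: "nat \<Rightarrow> real"
    and m :: nat
  assumes "m \<ge> 1"
    and "\<And>i. i < m \<Longrightarrow> compact (C i) \<and> convex (C i) \<and> 0 \<in> interior (C i)"
    and "\<And>i. i < m \<Longrightarrow> L i > 0"
    and "\<And>i t t' y. i < m \<Longrightarrow> t > 0 \<Longrightarrow> t' > 0 \<Longrightarrow>
           norm (prox (\<lambda>x. t * gauge_fn (C i) x) y - prox (\<lambda>x. t' * gauge_fn (C i) x) y)
             \<le> L i * \<bar>t - t'\<bar>"
    and "\<And>i. i < m \<Longrightarrow> \<theta> i > 0"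
    and "\<And>i. i < m \<Longrightarrow> \<theta>' i > 0"
  shows "norm (prox_comp m \<theta> (\<lambda>i. gauge_fn (C i)) y - prox_comp m \<theta>' (\<lambda>i. gauge_fn (C i)) y)
           \<le> sqrt (real m) * (MAX i\<in>{..<m}. L i) * sqrt (\<Sum>i<m. (\<theta> i - \<theta>' i)\<^sup>2)"
proof -
  define M where "M = (MAX i\<in>{..<m}. L i)"
  have L_le_M: "L i \<le> M" if "i < m" for i
    using that by (simp add: M_def)
  have "M \<ge> 0"
    using L_le_M[of 0] assms(1) assms(3)[of 0] by simp
  have "norm (prox_comp m \<theta> (\<lambda>i. gauge_fn (C i)) y - prox_comp m \<theta>' (\<lambda>i. gauge_fn (C i)) y)
      \<le> (\<Sum>i<m. L i * \<bar>\<theta> i - \<theta>' i\<bar>)"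
    using assms(2,4-6) by (intro norm_prox_comp_gauge_diff_le_sum) auto
  also have "\<dots> \<le> M * (\<Sum>i<m. \<bar>\<theta> i - \<theta>' i\<bar>)"
    unfolding sum_distrib_left by (intro sum_mono mult_right_mono L_le_M) auto
  also have "\<dots> \<le> M * (sqrt (real m) * L2_set (\<lambda>i. \<theta> i - \<theta>' i) {..<m})"
    using sum_abs_le_sqrt_card_mult_L2_set[of "\<lambda>i. \<theta> i - \<theta>' i" "{..<m}"] \<open>M \<ge> 0\<close>
    by (intro mult_left_mono) auto
  finally show ?thesis
    by (simp add: M_def L2_set_def mult_ac)
qed

end
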